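(* There are uncountably many distinct locating-paired-dominating sets of the king grid that have density $2/9$.
   Context: The king grid is the infinite graph with vertex set $\mathbb{Z}\times\mathbb{Z}$ in which two distinct vertices are adjacent iff their Euclidean distance is at most $\sqrt2$. $N(v)$ is the open neighborhood of $v$ and $N[v]=N(v)\cup\{v\}$. A set $S\subset V$ is a locating-paired-dominating set (LPDS) if (i) every vertex $v$ satisfies $N[v]\cap S\neq\emptyset$, (ii) the induced subgraph $G[S]$ has a perfect matching, and (iii) for any two distinct vertices $u,v\in V\setminus S$, $N(u)\cap S\neq N(v)\cap S$. For $k\ge 0$ and $u\in V$, $N^k[u]=\{x: d(u,x)\le k\}$ with $d$ the graph distance. The density of $A\subset V$ is $D(A)=\limsup_{k\to\infty}\frac{|A\cap N^k[u]|}{|N^k[u]|}$ (independent of $u$). *)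

theory Defs
  imports "HOL-Analysis.Analysis" "HOL-Library.Liminf_Limsup"
begin

type_synonym vtx = "int \<times> int"

definition king_adj :: "vtx \<Rightarrow> vtx \<Rightarrow> bool" where
  "king_adj u v \<longleftrightarrow> u \<noteq> v \<and>
     real_of_int ((fst u - fst v)^2 + (snd u - snd v)^2) \<le> 2"

definition nbh :: "vtx \<Rightarrow> vtx set" where
  "nbh v = {u. king_adj v u}"

definition cnbh :: "vtx \<Rightarrow> vtx set" where
  "cnbh v = insert v (nbh v)"

fun walk :: "nat \<Rightarrow> vtx \<Rightarrow> vtx \<Rightarrow> bool" where
  "walk 0 u v \<longleftrightarrow> u = v"
| "walk (Suc n) u v \<longleftrightarrow> (\<exists>w. king_adj u w \<and> walk n w v)"

text \<open>Graph distance (the king grid is connected).\<close>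
definition gdist :: "vtx \<Rightarrow> vtx \<Rightarrow> nat" where
  "gdist u v = (LEAST n. walk n u v)"

definition ball_k :: "nat \<Rightarrow> vtx \<Rightarrow> vtx set" where
  "ball_k k u = {x. gdist u x \<le> k}"

definition has_perfect_matching :: "vtx set \<Rightarrow> bool" where
  "has_perfect_matching S \<longleftrightarrow> (\<exists>M :: vtx set set.
     (\<forall>e\<in>M. \<exists>a b. e = {a, b} \<and> a \<in> S \<and> b \<in> S \<and> king_adj a b) \<and>
     (\<forall>e\<in>M. \<forall>e'\<in>M. e \<noteq> e' \<longrightarrow> e \<inter> e' = {}) \<and>
     (\<forall>v\<in>S. \<exists>e\<in>M. v \<in> e))"

definition is_LPDS :: "vtx set \<Rightarrow> bool" where
  "is_LPDS S \<longleftrightarrow>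
     (\<forall>v. cnbh v \<inter> S \<noteq> {}) \<and>
     has_perfect_matching S \<and>
     (\<forall>u v. u \<notin> S \<longrightarrow> v \<notin> S \<longrightarrow> u \<noteq> v \<longrightarrow> nbh u \<inter> S \<noteq> nbh v \<inter> S)"

text \<open>Density with respect to centre u (the paper notes independence of u).\<close>
definition density_at :: "vtx \<Rightarrow> vtx set \<Rightarrow> ereal" where
  "density_at u A = limsup (\<lambda>k. ereal (real (card (A \<inter> ball_k k u)) / real (card (ball_k k u))))"

end

theory Submission
  imports Defs "HOL-Real_Asymp.Real_Asymp"
begin

text \<open>
  Let row y of a set consist of the columns x with x \<equiv> r y or x \<equiv> r y + 4 (mod 9),
  for a row shift function r; every such set has density 2/9, whatever r is.  Let the
  shifts repeat a pattern of period 16, except that in every period whose index lies in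
  a set B of integers the rows 1..8 are slid one column to the left.  Domination, the
  pairing of each vertex with a vertex in the row above (even rows) or below (odd rows),
  and the locating property only involve seven consecutive rows, so they follow from a
  finite check of all windows of the pattern.  Distinct B give distinct sets.
\<close>

section \<open>Adjacency and distance in the king grid\<close>

lemma int_square_le_2_iff: "a\<^sup>2 \<le> 2 \<longleftrightarrow> \<bar>a\<bar> \<le> 1" for a :: int
proof
  assume "a\<^sup>2 \<le> 2"
  show "\<bar>a\<bar> \<le> 1"
  proof (rule ccontr)
    assume "\<not> \<bar>a\<bar> \<le> 1"
    then have "2 * 2 \<le> \<bar>a\<bar> * \<bar>a\<bar>" by (intro mult_mono) auto
    with \<open>a\<^sup>2 \<le> 2\<close> show False by (simp add: power2_eq_square)
  qed
qed (simp add: abs_square_le_1[symmetric])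

\<comment> \<open>declared as code equation so that the window check below decides adjacency on integers\<close>
lemma king_adj_iff [code]:
  "king_adj u v \<longleftrightarrow> u \<noteq> v \<and> \<bar>fst u - fst v\<bar> \<le> 1 \<and> \<bar>snd u - snd v\<bar> \<le> 1"
proof -
  have "a\<^sup>2 + b\<^sup>2 \<le> 2 \<longleftrightarrow> \<bar>a\<bar> \<le> 1 \<and> \<bar>b\<bar> \<le> 1" for a b :: int
    using int_square_le_2_iff[of a] int_square_le_2_iff[of b] abs_square_le_1[of a] abs_square_le_1[of b]
    by (smt (verit) zero_le_power2)
  then show ?thesis
    unfolding king_adj_def of_int_le_numeral_iff by presburger
qed

lemma king_adj_commute: "king_adj u v \<longleftrightarrow> king_adj v u"
  unfolding king_adj_iff by (auto simp: abs_minus_commute)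

lemma king_adj_translate: "king_adj (u + w) (v + w) \<longleftrightarrow> king_adj u v"
  unfolding king_adj_iff by (cases u, cases v, cases w) auto

lemma walk_imp_coordinate_bounds:
  "walk n u v \<Longrightarrow> \<bar>fst u - fst v\<bar> \<le> int n \<and> \<bar>snd u - snd v\<bar> \<le> int n"
proof (induction n arbitrary: u)
  case (Suc n)
  then obtain w where "king_adj u w" "walk n w v" by auto
  with Suc.IH[of w] show ?case unfolding king_adj_iff by auto
qed simp

lemma walk_of_chebyshev_distance:
  "max \<bar>fst u - fst v\<bar> \<bar>snd u - snd v\<bar> = int n \<Longrightarrow> walk n u v"
proof (induction n arbitrary: u)
  case 0
  then show ?case by (simp add: prod_eq_iff max_def split: if_splits)
next
  case (Suc n)
  \<comment> \<open>one king step towards v decreases the Chebyshev distance by one\<close>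
  define w where "w = (fst u + sgn (fst v - fst u), snd u + sgn (snd v - snd u))"
  have "max \<bar>fst w - fst v\<bar> \<bar>snd w - snd v\<bar> = int n"
    using Suc.prems by (auto simp: w_def sgn_if abs_if max_def split: if_splits)
  moreover have "king_adj u w"
    using Suc.prems by (auto simp: king_adj_iff w_def sgn_if prod_eq_iff max_def split: if_splits)
  ultimately show ?case using Suc.IH[of w] walk.simps(2) by blast
qed

lemma gdist_eq_chebyshev: "gdist u v = nat (max \<bar>fst u - fst v\<bar> \<bar>snd u - snd v\<bar>)"
  unfolding gdist_def
proof (rule Least_equality)
  show "walk (nat (max \<bar>fst u - fst v\<bar> \<bar>snd u - snd v\<bar>)) u v"
    by (rule walk_of_chebyshev_distance) (simp add: le_max_iff_disj)
qed (use walk_imp_coordinate_bounds in fastforce)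

lemma ball_k_eq_square:
  "ball_k k u = {fst u - int k..fst u + int k} \<times> {snd u - int k..snd u + int k}"
  unfolding ball_k_def gdist_eq_chebyshev by auto

section \<open>LPDS from local conditions\<close>

definition forward_offsets :: "vtx set" where
  "forward_offsets = {-2..2} \<times> {1..2} \<union> {1..2} \<times> {0}"

text \<open>
  The LPDS conditions at a vertex, seen from that vertex: T is the set translated so that
  the vertex is the origin, and up tells whether its partner lies in the row above.
  Locating is only required against the forward offsets, the other half following by
  symmetry, and a vertex of T separating N(0) from N(v) is searched only in N(0) and N(v).
\<close>
definition local_lpds_conditions :: "bool \<Rightarrow> (vtx \<Rightarrow> bool) \<Rightarrow> bool" where
  "local_lpds_conditions up T \<longleftrightarrow>
     (\<exists>p\<in>{-1..1} \<times> {-1..1}. T p) \<and>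
     (T (0, 0) \<longrightarrow> (\<exists>i\<in>{-1..1}. T (i, if up then 1 else -1))) \<and>
     (\<not> T (0, 0) \<longrightarrow> (\<forall>v\<in>forward_offsets. \<not> T v \<longrightarrow>
        (\<exists>p\<in>{-1..1} \<times> {-1..1}. T p \<and> king_adj (0, 0) p \<and> \<not> king_adj v p) \<or>
        (\<exists>p\<in>{-1..1} \<times> {-1..1}. T (v + p) \<and> king_adj v (v + p) \<and> \<not> king_adj (0, 0) (v + p))))"

definition vertical_edges :: "vtx set \<Rightarrow> vtx set set" where
  "vertical_edges S =
     {{u, v} | u v. u \<in> S \<and> v \<in> S \<and> king_adj u v \<and> even (snd u) \<and> snd v = snd u + 1}"

lemma vertical_edges_disjoint:
  assumes separated: "\<And>u v. u \<in> S \<Longrightarrow> v \<in> S \<Longrightarrow> snd u = snd v \<Longrightarrow> \<bar>fst u - fst v\<bar> \<le> 2 \<Longrightarrow> u = v"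
    and "e \<in> vertical_edges S" "e' \<in> vertical_edges S" "e \<noteq> e'"
  shows "e \<inter> e' = {}"
proof -
  have unique: "v = v'"
    if "v \<in> S" "v' \<in> S" "king_adj u v" "king_adj u v'" "snd v = snd v'" for u v v'
    using separated[OF that(1,2,5)] that(3,4) unfolding king_adj_iff by auto
  obtain u v where e: "e = {u, v}" "u \<in> S" "v \<in> S" "king_adj u v" "even (snd u)" "snd v = snd u + 1"
    using \<open>e \<in> vertical_edges S\<close> unfolding vertical_edges_def by blast
  obtain u' v' where e': "e' = {u', v'}" "u' \<in> S" "v' \<in> S" "king_adj u' v'" "even (snd u')" "snd v' = snd u' + 1"
    using \<open>e' \<in> vertical_edges S\<close> unfolding vertical_edges_def by blast
  have "u \<noteq> u'"
  proof
    assume "u = u'"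
    then have "v = v'" using unique[of v v' u] e e' by simp
    with \<open>u = u'\<close> show False using e(1) e'(1) \<open>e \<noteq> e'\<close> by simp
  qed
  moreover have "v \<noteq> v'"
  proof
    assume "v = v'"
    have "king_adj v u" "king_adj v u'"
      using e(4) e'(4) \<open>v = v'\<close> by (simp_all add: king_adj_commute)
    moreover have "snd u = snd u'"
      using e(6) e'(6) \<open>v = v'\<close> by simp
    ultimately have "u = u'"
      using unique e(2) e'(2) by blast
    with \<open>v = v'\<close> show False using e(1) e'(1) \<open>e \<noteq> e'\<close> by simp
  qed
  moreover have "u \<noteq> v'" "v \<noteq> u'"
    using e(5,6) e'(5,6) by auto
  ultimately show ?thesis using e(1) e'(1) by blast
qed

lemma vertical_edges_cover:
  assumes "u \<in> S" "v \<in> S" "king_adj u v" "snd v = snd u + (if even (snd u) then 1 else -1)"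
  shows "\<exists>e\<in>vertical_edges S. u \<in> e"
proof (cases "even (snd u)")
  case True
  then have "snd v = snd u + 1" using assms(4) by simp
  then have "{u, v} \<in> vertical_edges S"
    unfolding vertical_edges_def using assms(1-3) True by blast
  then show ?thesis by blast
next
  case False
  then have "snd u = snd v + 1" "even (snd v)" using assms(4) by simp_all
  moreover have "king_adj v u" using assms(3) by (simp add: king_adj_commute)
  ultimately have "{v, u} \<in> vertical_edges S"
    unfolding vertical_edges_def using assms(1,2) by blast
  then show ?thesis by blast
qed

lemma has_perfect_matching_of_vertical_partners:
  assumes partner: "\<And>u. u \<in> S \<Longrightarrow> \<exists>v\<in>S. king_adj u v \<and> snd v = snd u + (if even (snd u) then 1 else -1)"
    and separated: "\<And>u v. u \<in> S \<Longrightarrow> v \<in> S \<Longrightarrow> snd u = snd v \<Longrightarrow> \<bar>fst u - fst v\<bar> \<le> 2 \<Longrightarrow> u = v"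
  shows "has_perfect_matching S"
proof -
  have "\<exists>a b. e = {a, b} \<and> a \<in> S \<and> b \<in> S \<and> king_adj a b" if "e \<in> vertical_edges S" for e
    using that unfolding vertical_edges_def by blast
  moreover have "\<exists>e\<in>vertical_edges S. u \<in> e" if "u \<in> S" for u
    using partner[OF that] vertical_edges_cover[OF that] by blast
  ultimately show ?thesis
    unfolding has_perfect_matching_def
    by (intro exI[of _ "vertical_edges S"] conjI ballI impI vertical_edges_disjoint[OF separated]) auto
qed

lemma forward_offsets_cases:
  assumes "u \<noteq> v" "\<bar>fst u - fst v\<bar> \<le> 2" "\<bar>snd u - snd v\<bar> \<le> 2"
  shows "v - u \<in> forward_offsets \<or> u - v \<in> forward_offsets"
  using assms by (cases u, cases v) (auto simp: forward_offsets_def)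

lemma locating_of_forward_locating:
  assumes dominating: "\<And>u. cnbh u \<inter> S \<noteq> {}"
    and forward: "\<And>u v. u \<notin> S \<Longrightarrow> v \<notin> S \<Longrightarrow> v - u \<in> forward_offsets \<Longrightarrow> nbh u \<inter> S \<noteq> nbh v \<inter> S"
    and "u \<notin> S" "v \<notin> S" "u \<noteq> v"
  shows "nbh u \<inter> S \<noteq> nbh v \<inter> S"
proof
  assume same: "nbh u \<inter> S = nbh v \<inter> S"
  obtain z where "z \<in> cnbh u \<inter> S" using dominating by blast
  then have "z \<in> nbh u \<inter> S" using \<open>u \<notin> S\<close> by (auto simp: cnbh_def)
  then have "king_adj u z" "king_adj v z" using same by (auto simp: nbh_def)
  then have "\<bar>fst u - fst v\<bar> \<le> 2" "\<bar>snd u - snd v\<bar> \<le> 2" unfolding king_adj_iff by auto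
  then show False
    using forward_offsets_cases[OF \<open>u \<noteq> v\<close>] forward \<open>u \<notin> S\<close> \<open>v \<notin> S\<close> same by metis
qed

lemma is_LPDS_of_local_lpds_conditions:
  assumes local: "\<And>u. local_lpds_conditions (even (snd u)) (\<lambda>p. p + u \<in> S)"
    and separated: "\<And>u v. u \<in> S \<Longrightarrow> v \<in> S \<Longrightarrow> snd u = snd v \<Longrightarrow> \<bar>fst u - fst v\<bar> \<le> 2 \<Longrightarrow> u = v"
  shows "is_LPDS S"
proof -
  have dominating: "cnbh u \<inter> S \<noteq> {}" for u
  proof -
    obtain p where p: "p \<in> {-1..1} \<times> {-1..1}" "p + u \<in> S"
      using local[of u] unfolding local_lpds_conditions_def by blast
    then have "p + u \<in> cnbh u"
      by (cases p, cases u) (auto simp: cnbh_def nbh_def king_adj_iff)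
    with p(2) show ?thesis by blast
  qed
  have partner: "\<exists>v\<in>S. king_adj u v \<and> snd v = snd u + (if even (snd u) then 1 else -1)"
    if "u \<in> S" for u
  proof -
    have "(0, 0) + u \<in> S" using that by (simp add: zero_prod_def[symmetric])
    then obtain i where "i \<in> {-1..1}" "(i, if even (snd u) then 1 else -1) + u \<in> S"
      using local[of u] unfolding local_lpds_conditions_def by blast
    then show ?thesis
      by (intro bexI[of _ "(i, if even (snd u) then 1 else -1) + u"]) (auto simp: king_adj_iff zero_prod_def)
  qed
  have forward: "nbh u \<inter> S \<noteq> nbh v \<inter> S"
    if "u \<notin> S" "v \<notin> S" and offset: "v - u \<in> forward_offsets" for u v
  proof -
    have "(0, 0) + u \<notin> S" "(v - u) + u \<notin> S" using that by (simp_all add: zero_prod_def[symmetric])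
    then obtain q where "q + u \<in> S" "king_adj (0, 0) q \<noteq> king_adj (v - u) q"
      using local[of u] offset unfolding local_lpds_conditions_def by blast
    moreover have "king_adj u (q + u) = king_adj (0, 0) q" "king_adj v (q + u) = king_adj (v - u) q"
      using king_adj_translate[of "(0, 0)" u q] king_adj_translate[of "v - u" u q]
      by (simp_all add: zero_prod_def[symmetric])
    ultimately show ?thesis by (auto simp: nbh_def)
  qed
  show ?thesis
    unfolding is_LPDS_def
    using dominating has_perfect_matching_of_vertical_partners[OF partner separated]
      locating_of_forward_locating[OF dominating forward] by blast
qed

lemma local_lpds_conditions_cong:
  assumes "\<And>p. p \<in> {-3..3} \<times> {-3..3} \<Longrightarrow> T p = T' p"
  shows "local_lpds_conditions up T = local_lpds_conditions up T'"
proof -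
  have near: "T p = T' p" if "p \<in> {-1..1} \<times> {-1..1}" for p
    using assms that by auto
  have above: "T (i, if up then 1 else -1) = T' (i, if up then 1 else -1)" if "i \<in> {-1..1}" for i
    using assms that by auto
  have forward: "T v = T' v" if "v \<in> forward_offsets" for v
    using assms that by (auto simp: forward_offsets_def)
  have around_forward: "T (v + p) = T' (v + p)" if "v \<in> forward_offsets" "p \<in> {-1..1} \<times> {-1..1}" for v p
    using assms that by (cases v, cases p) (auto simp: forward_offsets_def)
  show ?thesis
    unfolding local_lpds_conditions_def by (simp add: near above forward around_forward)
qed

section \<open>Row patterns of density 2/9\<close>

definition row_pattern :: "(int \<Rightarrow> int) \<Rightarrow> vtx \<Rightarrow> bool" where
  "row_pattern r p \<longleftrightarrow> (fst p - r (snd p)) mod 9 \<in> {0, 4}"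

lemma row_pattern_separated:
  assumes "row_pattern r u" "row_pattern r v" "snd u = snd v" "\<bar>fst u - fst v\<bar> \<le> 2"
  shows "u = v"
proof -
  define a where "a = r (snd u)"
  have "(fst u - a) mod 9 \<in> {0, 4}" "(fst v - a) mod 9 \<in> {0, 4}"
    using assms(1-3) by (simp_all add: row_pattern_def a_def)
  moreover have "(fst u - fst v) mod 9 = ((fst u - a) mod 9 - (fst v - a) mod 9) mod 9"
    by (simp add: mod_diff_eq)
  ultimately have "(fst u - fst v) mod 9 \<in> {0, 4, 5}" by auto
  moreover have "fst u - fst v \<in> {-2, -1, 0, 1, 2}" using assms(4) by auto
  ultimately have "fst u = fst v" by auto
  with assms(3) show ?thesis by (simp add: prod_eq_iff)
qed

lemma card_period_residues_in:
  fixes m a p :: int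
  assumes "A \<subseteq> {0..<p}"
  shows "card {x \<in> {m..<m + p}. (x - a) mod p \<in> A} = card A"
proof -
  have left_inverse: "m + ((x - a) mod p + a - m) mod p = x" if "m \<le> x" "x < m + p" for x
  proof -
    have "((x - a) mod p + (a - m)) mod p = (x - a + (a - m)) mod p" by (rule mod_add_left_eq)
    also have "\<dots> = x - m" using that by simp
    finally show ?thesis by (simp add: algebra_simps)
  qed
  have right_inverse: "(m + (k + a - m) mod p - a) mod p = k" if "k \<in> A" for k
  proof -
    have "((k + a - m) mod p + (m - a)) mod p = (k + a - m + (m - a)) mod p" by (rule mod_add_left_eq)
    also have "\<dots> = k" using that assms by auto
    finally show ?thesis by (simp add: algebra_simps)
  qed
  have "bij_betw (\<lambda>x. (x - a) mod p) {x \<in> {m..<m + p}. (x - a) mod p \<in> A} A"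
    by (rule bij_betwI[where g = "\<lambda>k. m + (k + a - m) mod p"])
      (use assms left_inverse right_inverse in auto)
  then show ?thesis by (rule bij_betw_same_card)
qed

lemma finite_segment_filter: "finite {x \<in> {m..<n}. P x}" for m n :: int
  by (rule finite_subset[of _ "{m..<n}"]) auto

lemma card_periodic_segment:
  fixes P :: "int \<Rightarrow> bool"
  assumes period: "\<And>m. card {x \<in> {m..<m + int p}. P x} = c"
  shows "card {x \<in> {m..<m + int (p * t)}. P x} = c * t"
proof (induction t)
  case (Suc t)
  define l where "l = m + int (p * t)"
  have l: "m \<le> l" "m + int (p * Suc t) = l + int p"
    by (simp_all add: l_def)
  have "{x \<in> {m..<m + int (p * Suc t)}. P x} = {x \<in> {m..<l}. P x} \<union> {x \<in> {l..<l + int p}. P x}"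
    unfolding l(2) using l(1) by auto
  moreover have "card ({x \<in> {m..<l}. P x} \<union> {x \<in> {l..<l + int p}. P x}) =
      card {x \<in> {m..<l}. P x} + card {x \<in> {l..<l + int p}. P x}"
    by (intro card_Un_disjoint finite_segment_filter) auto
  ultimately show ?case using Suc.IH period[of l] by (simp add: l_def)
qed simp

lemma card_periodic_segment_bounds:
  fixes P :: "int \<Rightarrow> bool"
  assumes period: "\<And>m. card {x \<in> {m..<m + int p}. P x} = c" and "0 < p"
  shows "c * (n div p) \<le> card {x \<in> {m..<m + int n}. P x}"
    and "card {x \<in> {m..<m + int n}. P x} \<le> c * (n div p) + c"
proof -
  have "p * (n div p) \<le> n" "n \<le> p * Suc (n div p)"
    using times_div_less_eq_dividend dividend_less_times_div[OF \<open>0 < p\<close>, of n] by simp_all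
  then have "int (p * (n div p)) \<le> int n" "int n \<le> int (p * Suc (n div p))"
    by (simp_all only: of_nat_le_iff)
  then have lower: "{x \<in> {m..<m + int (p * (n div p))}. P x} \<subseteq> {x \<in> {m..<m + int n}. P x}"
    and upper: "{x \<in> {m..<m + int n}. P x} \<subseteq> {x \<in> {m..<m + int (p * Suc (n div p))}. P x}"
    by auto
  show "c * (n div p) \<le> card {x \<in> {m..<m + int n}. P x}"
    using card_mono[OF finite_segment_filter lower] card_periodic_segment[OF period, of m "n div p"]
    by simp
  show "card {x \<in> {m..<m + int n}. P x} \<le> c * (n div p) + c"
    using card_mono[OF finite_segment_filter upper] card_periodic_segment[OF period, of m "Suc (n div p)"]
    by simp
qed

lemma card_row_pattern_segment:
  "\<bar>real (card {x \<in> {m..<m + int n}. row_pattern r (x, y)}) - 2 * real n / 9\<bar> \<le> 2"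
proof -
  have "card {x \<in> {m..<m + int 9}. row_pattern r (x, y)} = 2" for m
    using card_period_residues_in[of "{0, 4}" 9 m "r y"] by (simp add: row_pattern_def)
  from card_periodic_segment_bounds[where p = 9, OF this]
  have "2 * (n div 9) \<le> card {x \<in> {m..<m + int n}. row_pattern r (x, y)}"
    "card {x \<in> {m..<m + int n}. row_pattern r (x, y)} \<le> 2 * (n div 9) + 2"
    by simp_all
  moreover have "9 * real (n div 9) \<le> real n" "real n < 9 * real (n div 9) + 9"
    by linarith+
  ultimately show ?thesis by linarith
qed

lemma card_row_pattern_ball:
  "card (Collect (row_pattern r) \<inter> ball_k k (0, 0)) =
    (\<Sum>y\<in>{-int k..int k}. card {x \<in> {-int k..int k}. row_pattern r (x, y)})"
proof -
  have "Collect (row_pattern r) \<inter> ball_k k (0, 0) =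
      (\<lambda>(y, x). (x, y)) ` (SIGMA y:{-int k..int k}. {x \<in> {-int k..int k}. row_pattern r (x, y)})"
    unfolding ball_k_eq_square by force
  then have "card (Collect (row_pattern r) \<inter> ball_k k (0, 0)) =
      card (SIGMA y:{-int k..int k}. {x \<in> {-int k..int k}. row_pattern r (x, y)})"
    by (simp add: card_image swap_inj_on)
  also have "\<dots> = (\<Sum>y\<in>{-int k..int k}. card {x \<in> {-int k..int k}. row_pattern r (x, y)})"
    by (rule card_SigmaI) (auto intro: finite_subset[of _ "{-int k..int k}"])
  finally show ?thesis .
qed

lemma row_pattern_ball_ratio_bound:
  "\<bar>real (card (Collect (row_pattern r) \<inter> ball_k k (0, 0))) / real (card (ball_k k (0, 0))) - 2 / 9\<bar>
     \<le> 2 / real (2 * k + 1)"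
proof -
  define n where "n = 2 * k + 1"
  define C where "C = real (card (Collect (row_pattern r) \<inter> ball_k k (0, 0)))"
  have rows: "{-int k..int k} = {-int k..<-int k + int n}" by (auto simp: n_def)
  have "0 < n" by (simp add: n_def)
  have "\<bar>C - real n * (2 * real n / 9)\<bar> =
      \<bar>\<Sum>y\<in>{-int k..int k}. real (card {x \<in> {-int k..int k}. row_pattern r (x, y)}) - 2 * real n / 9\<bar>"
    by (simp add: C_def card_row_pattern_ball sum_subtractf rows)
  also have "\<dots> \<le> (\<Sum>y\<in>{-int k..int k}. \<bar>real (card {x \<in> {-int k..int k}. row_pattern r (x, y)}) - 2 * real n / 9\<bar>)"
    by (rule sum_abs)
  also have "\<dots> \<le> (\<Sum>y\<in>{-int k..int k}. 2)"
    by (rule sum_mono) (use card_row_pattern_segment[of "-int k" n r] in \<open>simp add: rows\<close>)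
  also have "\<dots> = real n * 2"
    by (simp add: n_def)
  finally have deviation: "\<bar>C - real n * (2 * real n / 9)\<bar> \<le> real n * 2" .
  have "card (ball_k k (0, 0)) = n * n"
    by (simp add: ball_k_eq_square rows card_cartesian_product)
  then have "\<bar>C / real (card (ball_k k (0, 0))) - 2 / 9\<bar> = \<bar>C - real n * (2 * real n / 9)\<bar> / (real n * real n)"
    using \<open>0 < n\<close> by (simp add: field_simps)
  also have "\<dots> \<le> real n * 2 / (real n * real n)"
    using deviation by (intro divide_right_mono) simp_all
  also have "\<dots> = 2 / real (2 * k + 1)"
    using \<open>0 < n\<close> unfolding n_def[symmetric] by simp
  finally show ?thesis
    unfolding C_def .
qed

lemma density_row_pattern: "density_at (0, 0) (Collect (row_pattern r)) = ereal (2 / 9)"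
proof -
  define f where "f k = real (card (Collect (row_pattern r) \<inter> ball_k k (0, 0))) / real (card (ball_k k (0, 0)))"
    for k
  have "(\<lambda>k. 2 / real (2 * k + 1)) \<longlonglongrightarrow> 0"
    by real_asymp
  then have "(\<lambda>k. f k - 2 / 9) \<longlonglongrightarrow> 0"
    by (rule Lim_null_comparison[OF always_eventually, rotated])
      (unfold real_norm_def f_def, intro allI row_pattern_ball_ratio_bound)
  then have "f \<longlonglongrightarrow> 2 / 9"
    by (rule LIM_zero_cancel)
  then have "limsup (\<lambda>k. ereal (f k)) = ereal (2 / 9)"
    by (intro lim_imp_Limsup trivial_limit_sequentially tendsto_ereal)
  then show ?thesis
    unfolding density_at_def f_def .
qed

section \<open>Sliding the blocks of a periodic pattern\<close>

definition base_shift :: "int list" where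
  "base_shift = [0, 5, 7, 3, 1, 0, 7, 3, 5, 0, 7, 2, 4, 5, 7, 2]"

definition row_shift :: "int set \<Rightarrow> int \<Rightarrow> int" where
  "row_shift B y = base_shift ! nat (y mod 16) - (if y div 16 \<in> B \<and> y mod 16 \<in> {1..8} then 1 else 0)"

lemma row_shift_block_translate:
  assumes "-7 \<le> z" "z < 32"
  shows "row_shift B (16 * q + z) = row_shift {j \<in> {0, 1}. q + j \<in> B} z"
proof -
  have "(16 * q + z) div 16 = q + z div 16" "(16 * q + z) mod 16 = z mod 16"
    by simp_all
  moreover have "z div 16 \<in> {0, 1} \<or> z mod 16 \<notin> {1..8}"
    using assms by auto presburger
  ultimately show ?thesis
    unfolding row_shift_def by auto
qed

definition window :: "int set \<Rightarrow> int \<Rightarrow> int \<Rightarrow> int list" where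
  "window B z x = map (\<lambda>d. row_shift B (z + d) - x) [-3..3]"

lemma window_nth:
  assumes "-3 \<le> d" "d \<le> 3"
  shows "window B z x ! nat (d + 3) = row_shift B (z + d) - x"
proof -
  have "nat (d + 3) < length [-3..3::int]"
    using assms by simp
  moreover have "[-3..3] ! nat (d + 3) = d"
    using assms by (subst nth_upto) auto
  ultimately show ?thesis
    unfolding window_def by (simp only: nth_map)
qed

text \<open>
  A case (z, B, x) is the row z of the period, the set B \<subseteq> {0, 1} of slid periods among
  the current and the next one, and the column x mod 9.  The check is a predicate on the
  whole tuple so that code_simp unfolds it only on concrete arguments: simplifying it
  symbolically under the quantifiers is prohibitively slow.
\<close>
definition window_ok :: "int \<times> int set \<times> int \<Rightarrow> bool" where
  "window_ok c = (case c of (z, B, x) \<Rightarrow>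
     local_lpds_conditions (even z) (row_pattern (\<lambda>d. window B z x ! nat (d + 3))))"

lemma all_windows_ok: "\<forall>c\<in>{0..15} \<times> Pow {0, 1} \<times> {0..8}. window_ok c"
  by code_simp

definition sliding_lpds :: "int set \<Rightarrow> vtx set" where
  "sliding_lpds B = Collect (row_pattern (row_shift B))"

lemma sliding_lpds_translate_window:
  assumes "p \<in> {-3..3} \<times> {-3..3}"
  shows "p + (x, y) \<in> sliding_lpds B \<longleftrightarrow>
    row_pattern (\<lambda>d. window {j \<in> {0, 1}. y div 16 + j \<in> B} (y mod 16) (x mod 9) ! nat (d + 3)) p"
proof -
  define z where "z = y mod 16"
  define B' where "B' = {j \<in> {0, 1}. y div 16 + j \<in> B}"
  obtain a d where p: "p = (a, d)" by force
  have "0 \<le> z" "z < 16" by (simp_all add: z_def)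
  with assms p have "-7 \<le> z + d" "z + d < 32" by auto
  then have "row_shift B (16 * (y div 16) + (z + d)) = row_shift B' (z + d)"
    unfolding B'_def by (rule row_shift_block_translate)
  then have row: "row_shift B (d + y) = row_shift B' (z + d)"
    by (simp add: z_def algebra_simps)
  have window: "window B' z (x mod 9) ! nat (d + 3) = row_shift B' (z + d) - x mod 9"
    using assms p by (simp add: window_nth)
  have "(a - window B' z (x mod 9) ! nat (d + 3)) mod 9 = (a + x mod 9 - row_shift B (d + y)) mod 9"
    unfolding window row by (simp add: algebra_simps)
  also have "\<dots> = (a + x - row_shift B (d + y)) mod 9"
    by (rule mod_diff_cong) (simp_all add: mod_simps)
  finally show ?thesis
    unfolding sliding_lpds_def p z_def B'_def by (simp add: row_pattern_def)
qed

lemma local_lpds_conditions_sliding_lpds: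
  "local_lpds_conditions (even (snd u)) (\<lambda>p. p + u \<in> sliding_lpds B)"
proof -
  obtain x y where u: "u = (x, y)" by force
  define B' where "B' = {j \<in> {0, 1}. y div 16 + j \<in> B}"
  have "y mod 16 \<in> {0..15}" "B' \<in> Pow {0, 1}" "x mod 9 \<in> {0..8}"
    by (auto simp: B'_def)
  then have "window_ok (y mod 16, B', x mod 9)"
    using all_windows_ok by blast
  then have "local_lpds_conditions (even y) (row_pattern (\<lambda>d. window B' (y mod 16) (x mod 9) ! nat (d + 3)))"
    by (simp add: window_ok_def dvd_mod_iff)
  moreover have "local_lpds_conditions (even y) (row_pattern (\<lambda>d. window B' (y mod 16) (x mod 9) ! nat (d + 3)))
      = local_lpds_conditions (even y) (\<lambda>p. p + u \<in> sliding_lpds B)"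
    by (rule local_lpds_conditions_cong) (simp add: u B'_def sliding_lpds_translate_window)
  ultimately show ?thesis
    using u by simp
qed

lemma is_LPDS_sliding_lpds: "is_LPDS (sliding_lpds B)"
  by (rule is_LPDS_of_local_lpds_conditions[OF local_lpds_conditions_sliding_lpds])
    (unfold sliding_lpds_def mem_Collect_eq, rule row_pattern_separated)

lemma density_sliding_lpds: "density_at (0, 0) (sliding_lpds B) = ereal (2 / 9)"
  unfolding sliding_lpds_def by (rule density_row_pattern)

lemma sliding_lpds_probe: "(5, 16 * n + 1) \<in> sliding_lpds B \<longleftrightarrow> n \<notin> B"
proof -
  have "row_shift B (16 * n + 1) = (if n \<in> B then 4 else 5)"
    by (simp add: row_shift_def base_shift_def)
  then show ?thesis
    by (simp add: sliding_lpds_def row_pattern_def)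
qed

lemma inj_sliding_lpds: "inj sliding_lpds"
  by (rule injI) (metis sliding_lpds_probe subsetI subset_antisym)

lemma uncountable_UNIV_int_set: "uncountable (UNIV :: int set set)"
proof
  assume "countable (UNIV :: int set set)"
  then obtain f :: "nat \<Rightarrow> int set" where "range f = UNIV"
    by (metis uncountable_def UNIV_not_empty)
  have "(f \<circ> nat) ` UNIV = Pow UNIV"
  proof (intro equalityI subsetI)
    fix A :: "int set"
    from \<open>range f = UNIV\<close> obtain n where "A = f n" by blast
    then have "A = (f \<circ> nat) (int n)" by simp
    then show "A \<in> (f \<circ> nat) ` UNIV" by blast
  qed simp
  with Cantors_theorem show False by blast
qed

theorem theorem5:
  shows "uncountable {S :: vtx set. is_LPDS S \<and> density_at (0, 0) S = ereal (2 / 9)}"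
proof -
  have "range sliding_lpds \<subseteq> {S. is_LPDS S \<and> density_at (0, 0) S = ereal (2 / 9)}"
    using is_LPDS_sliding_lpds density_sliding_lpds by blast
  moreover have "uncountable (range sliding_lpds)"
    using uncountable_UNIV_int_set inj_sliding_lpds
    by (metis countable_image_inj_on)
  ultimately show ?thesis
    using countable_subset by blast
qed

end
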